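(* Let $\gamma_1,\dots,\gamma_N\in\mathbb{R}$ and $\alpha_1,\dots,\alpha_N>0$, and let $K(t)=\sum_{j=1}^N\gamma_je^{-\alpha_jt}$, whose Laplace transform is $k(\lambda)=\sum_{j=1}^N\frac{\gamma_j}{\lambda+\alpha_j}$. Then $K(t)\ge0$ for all $t\ge0$ if and only if $\sum_{j=1}^N\frac{\gamma_j}{(\lambda+\alpha_j)^m}\ge0$ for every integer $m\ge1$ and every $\lambda>0$. *)

theory Defs
  imports Complex_Main
begin

end

theory Submission
  imports Defs "HOL-Probability.Distributions"
begin

text \<open>
  For \<open>\<lambda> > 0\<close>, the sum \<open>\<Sum> \<gamma>_j / (\<lambda> + \<alpha>_j)^(k+1)\<close> is the integral over \<open>t \<ge> 0\<close> of
  \<open>t^k e^(-\<lambda>t) K(t) / k!\<close>, because \<open>t^k e^(-c t) / k!\<close> is \<open>c^-(k+1)\<close> times the Erlang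
  density of rate \<open>c\<close>; so \<open>K \<ge> 0\<close> makes all these sums nonnegative. Conversely,
  \<open>(n/t)^n \<Sum> \<gamma>_j / (n/t + \<alpha>_j)^n = \<Sum> \<gamma>_j / (1 + \<alpha>_j t/n)^n\<close> tends to \<open>K(t)\<close> as
  \<open>n \<rightarrow> \<infinity>\<close> (Post--Widder inversion), and \<open>K(0)\<close> is the limit of \<open>K(t)\<close> as \<open>t \<rightarrow> 0\<^sup>+\<close>.
\<close>

lemma has_bochner_integral_erlang_density:
  assumes "0 < c"
  shows "has_bochner_integral lborel (erlang_density k c) 1"
proof (rule has_bochner_integral_nn_integral)
  show "(\<integral>\<^sup>+ x. ennreal (erlang_density k c x) \<partial>lborel) = ennreal 1"
    using nn_integral_erlang_ith_moment[OF assms, of k 0] by simp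
qed (use assms in auto)

lemma erlang_density_div_power:
  assumes "0 < c" "0 \<le> x"
  shows "erlang_density k c x / c ^ Suc k = x ^ k * exp (- c * x) / fact k"
  using assms by (simp add: erlang_density_def)

lemma exp_sum_nonneg_imp_laplace_power_nonneg:
  fixes \<gamma> \<alpha> :: "'a \<Rightarrow> real"
  assumes pos: "\<And>j. j \<in> A \<Longrightarrow> 0 < l + \<alpha> j"
    and nonneg: "\<And>t. 0 \<le> t \<Longrightarrow> 0 \<le> (\<Sum>j\<in>A. \<gamma> j * exp (- \<alpha> j * t))"
  shows "0 \<le> (\<Sum>j\<in>A. \<gamma> j / (l + \<alpha> j) ^ Suc k)"
proof -
  define f where
    "f x = (\<Sum>j\<in>A. \<gamma> j * (erlang_density k (l + \<alpha> j) x / (l + \<alpha> j) ^ Suc k))" for x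
  have "has_bochner_integral lborel f (\<Sum>j\<in>A. \<gamma> j * (1 / (l + \<alpha> j) ^ Suc k))"
    unfolding f_def
    by (intro has_bochner_integral_sum has_bochner_integral_mult_right
        has_bochner_integral_divide has_bochner_integral_erlang_density pos)
  moreover have "0 \<le> f x" for x
  proof (cases "x < 0")
    case True
    then show ?thesis by (simp add: f_def erlang_density_def)
  next
    case False
    have "f x = (\<Sum>j\<in>A. x ^ k * exp (- l * x) / fact k * (\<gamma> j * exp (- \<alpha> j * x)))"
      unfolding f_def
    proof (rule sum.cong)
      fix j assume "j \<in> A"
      have "exp (- (l + \<alpha> j) * x) = exp (- l * x) * exp (- \<alpha> j * x)"
        by (simp add: algebra_simps flip: exp_add)
      then show "\<gamma> j * (erlang_density k (l + \<alpha> j) x / (l + \<alpha> j) ^ Suc k)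
          = x ^ k * exp (- l * x) / fact k * (\<gamma> j * exp (- \<alpha> j * x))"
        using erlang_density_div_power[OF pos[OF \<open>j \<in> A\<close>], of x k] False by simp
    qed simp
    also have "\<dots> = x ^ k * exp (- l * x) / fact k * (\<Sum>j\<in>A. \<gamma> j * exp (- \<alpha> j * x))"
      by (simp add: sum_distrib_left)
    also have "\<dots> \<ge> 0"
      using False nonneg by (intro mult_nonneg_nonneg) auto
    finally show ?thesis .
  qed
  ultimately have "0 \<le> (\<Sum>j\<in>A. \<gamma> j * (1 / (l + \<alpha> j) ^ Suc k))"
    by (metis has_bochner_integral_integral_eq integral_nonneg_AE AE_I2)
  then show ?thesis by simp
qed

(* Also valid when s + a = 0 (both sides are 0), so no sign condition on the \<alpha> j is needed below. *)
lemma power_one_plus_div_eq: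
  fixes a g :: real
  assumes "0 < s"
  shows "g / (1 + a / s) ^ n = s ^ n * (g / (s + a) ^ n)"
proof -
  from assms have "1 + a / s = (s + a) / s" by (simp add: field_simps)
  then show ?thesis by (simp add: power_divide)
qed

lemma laplace_powers_nonneg_imp_exp_sum_nonneg_pos:
  fixes \<gamma> \<alpha> :: "'a \<Rightarrow> real"
  assumes nonneg: "\<And>m l. 1 \<le> m \<Longrightarrow> 0 < l \<Longrightarrow> 0 \<le> (\<Sum>j\<in>A. \<gamma> j / (l + \<alpha> j) ^ m)"
    and "0 < t"
  shows "0 \<le> (\<Sum>j\<in>A. \<gamma> j * exp (- \<alpha> j * t))"
proof -
  define b where "b n = (\<Sum>j\<in>A. \<gamma> j / (1 + \<alpha> j * t / real n) ^ n)" for n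
  have "b \<longlonglongrightarrow> (\<Sum>j\<in>A. \<gamma> j / exp (\<alpha> j * t))"
    unfolding b_def by (intro tendsto_intros tendsto_exp_limit_sequentially) auto
  moreover have "0 \<le> b n" if "1 \<le> n" for n
  proof -
    have s: "0 < real n / t" using that \<open>0 < t\<close> by simp
    have "b n = (real n / t) ^ n * (\<Sum>j\<in>A. \<gamma> j / (real n / t + \<alpha> j) ^ n)"
      using power_one_plus_div_eq[OF s] \<open>0 < t\<close>
      by (simp add: b_def sum_distrib_left)
    also have "\<dots> \<ge> 0"
      using nonneg[OF that s] s by simp
    finally show ?thesis .
  qed
  ultimately have "0 \<le> (\<Sum>j\<in>A. \<gamma> j / exp (\<alpha> j * t))"
    by (intro LIMSEQ_le_const) auto
  then show ?thesis by (simp add: exp_minus divide_inverse)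
qed

lemma laplace_powers_nonneg_imp_exp_sum_nonneg:
  fixes \<gamma> \<alpha> :: "'a \<Rightarrow> real"
  assumes nonneg: "\<And>m l. 1 \<le> m \<Longrightarrow> 0 < l \<Longrightarrow> 0 \<le> (\<Sum>j\<in>A. \<gamma> j / (l + \<alpha> j) ^ m)"
    and "0 \<le> t"
  shows "0 \<le> (\<Sum>j\<in>A. \<gamma> j * exp (- \<alpha> j * t))"
proof (cases "t = 0")
  case True
  have "((\<lambda>s. \<Sum>j\<in>A. \<gamma> j * exp (- \<alpha> j * s)) \<longlongrightarrow> (\<Sum>j\<in>A. \<gamma> j * exp (- \<alpha> j * 0)))
      (at_right 0)"
    by (intro tendsto_intros)
  moreover have "\<forall>\<^sub>F s in at_right 0. 0 \<le> (\<Sum>j\<in>A. \<gamma> j * exp (- \<alpha> j * s))"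
    using eventually_at_right_less
    by (rule eventually_mono) (rule laplace_powers_nonneg_imp_exp_sum_nonneg_pos[OF nonneg])
  ultimately show ?thesis
    using True by (auto intro: tendsto_lowerbound)
next
  case False
  with \<open>0 \<le> t\<close> show ?thesis
    by (intro laplace_powers_nonneg_imp_exp_sum_nonneg_pos[OF nonneg]) auto
qed

theorem lemma5p1:
  fixes N :: nat and \<gamma> \<alpha> :: "nat \<Rightarrow> real"
  assumes "\<And>j. j \<in> {1..N} \<Longrightarrow> \<alpha> j > 0"
  shows "(\<forall>t\<ge>0. (\<Sum>j=1..N. \<gamma> j * exp (- \<alpha> j * t)) \<ge> 0) \<longleftrightarrow>
         (\<forall>m::nat\<ge>1. \<forall>l::real>0. (\<Sum>j=1..N. \<gamma> j / (l + \<alpha> j) ^ m) \<ge> 0)"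
proof
  assume K: "\<forall>t\<ge>0. (\<Sum>j=1..N. \<gamma> j * exp (- \<alpha> j * t)) \<ge> 0"
  show "\<forall>m::nat\<ge>1. \<forall>l::real>0. (\<Sum>j=1..N. \<gamma> j / (l + \<alpha> j) ^ m) \<ge> 0"
  proof (intro allI impI)
    fix m :: nat and l :: real
    assume "1 \<le> m" "0 < l"
    then obtain k where "m = Suc k" by (cases m) auto
    have "0 < l + \<alpha> j" if "j \<in> {1..N}" for j
      using assms[OF that] \<open>0 < l\<close> by simp
    then have "0 \<le> (\<Sum>j=1..N. \<gamma> j / (l + \<alpha> j) ^ Suc k)"
      using K by (intro exp_sum_nonneg_imp_laplace_power_nonneg) auto
    then show "0 \<le> (\<Sum>j=1..N. \<gamma> j / (l + \<alpha> j) ^ m)"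
      using \<open>m = Suc k\<close> by simp
  qed
next
  assume L: "\<forall>m::nat\<ge>1. \<forall>l::real>0. (\<Sum>j=1..N. \<gamma> j / (l + \<alpha> j) ^ m) \<ge> 0"
  show "\<forall>t\<ge>0. (\<Sum>j=1..N. \<gamma> j * exp (- \<alpha> j * t)) \<ge> 0"
    using L by (blast intro: laplace_powers_nonneg_imp_exp_sum_nonneg)
qed

end
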